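(* Let $\mathbb{X}$ be a real or complex Banach algebra with identity, $\mathcal{G}$ its group of units, $k\ge1$ an integer, $a_0,\dots,a_k,b_0,\dots,b_k\in\mathbb{X}$ with $a_k\ne0$ or $b_k\ne0$, and $g_n:\mathbb{X}\to\mathbb{X}$ ($n\ge0$) functions satisfying $|g_n(\xi)|\le\sigma|\xi|$ for all $\xi\in\mathbb{X}$ and all $n$, for some real $\sigma>0$. Then every solution $\{x_n\}$ of $$x_{n+1}=\sum_{i=0}^{k}a_ix_{n-i}+g_n\Big(\sum_{i=0}^{k}b_ix_{n-i}\Big),\quad n\ge0,$$ converges to $0$ in norm provided either (a) $\sum_{i=0}^{k}(|a_i|+\sigma|b_i|)<1$; or (b) the polynomials $P(\xi)=\xi^{k+1}-\sum_{i=0}^{k}a_i\xi^{k-i}$ and $Q(\xi)=\sum_{i=0}^{k}b_i\xi^{k-i}$ have a common root $\rho\in\mathcal{G}$ with $|\rho|<1$ and $$\sum_{i=0}^{k-1}\big(|p_i|+\sigma|q_i|\big)<1,$$ where $p_i=\rho^{i+1}-a_0\rho^i-\cdots-a_i$ and $q_i=b_0\rho^i+b_1\rho^{i-1}+\cdots+b_i$ for $i=0,\dots,k-1$.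
   Context: A Banach algebra with identity is a Banach space $\mathbb{X}$ (norm $|\cdot|$) with an associative bilinear multiplication satisfying $|xy|\le|x||y|$ and an identity $1$ with $|1|=1$. $\mathcal{G}$ is the set of invertible elements. Polynomials are evaluated with coefficients on the left. Solutions are generated by iteration from arbitrary initial values $x_0,\dots,x_{-k}\in\mathbb{X}$. *)

theory Defs
  imports "HOL-Analysis.Analysis"
begin

definition is_unit_elem :: "'a::monoid_mult \<Rightarrow> bool" where
  "is_unit_elem x \<longleftrightarrow> (\<exists>y. x * y = 1 \<and> y * x = 1)"

definition polyP :: "nat \<Rightarrow> (nat \<Rightarrow> 'a::ring_1) \<Rightarrow> 'a \<Rightarrow> 'a" where
  "polyP k a \<xi> = \<xi> ^ (k + 1) - (\<Sum>i=0..k. a i * \<xi> ^ (k - i))"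

definition polyQ :: "nat \<Rightarrow> (nat \<Rightarrow> 'a::ring_1) \<Rightarrow> 'a \<Rightarrow> 'a" where
  "polyQ k b \<xi> = (\<Sum>i=0..k. b i * \<xi> ^ (k - i))"

definition pcoef :: "(nat \<Rightarrow> 'a::ring_1) \<Rightarrow> 'a \<Rightarrow> nat \<Rightarrow> 'a" where
  "pcoef a \<rho> i = \<rho> ^ (i + 1) - (\<Sum>j=0..i. a j * \<rho> ^ (i - j))"

definition qcoef :: "(nat \<Rightarrow> 'a::ring_1) \<Rightarrow> 'a \<Rightarrow> nat \<Rightarrow> 'a" where
  "qcoef b \<rho> i = (\<Sum>j=0..i. b j * \<rho> ^ (i - j))"

end

theory Submission
  imports Defs
begin

(* Both criteria reduce to one scalar fact: a nonnegative sequence with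
   v(n+1) <= sum_{i<=m} c_i v(n-i), where c_i >= 0 and sum c_i < 1, tends to 0
   (it decays like (sum c_i)^(n div (m+1))).
   Criterion (a) at an arbitrary order m follows by taking norms in the recurrence:
   |x(n+1)| <= sum_i (|a_i| + sigma |b_i|) |x(n-i)|.
   For criterion (b) put u_n = x_n - rho x_(n-1).  Because rho is a common root of P and
   Q, Horner's scheme telescopes: sum_{i<k} q_i u_(n-i) = sum_{i<=k} b_i x_(n-i) and
   sum_{i<k} p_i u_(n-i) = rho x_n - sum_{i<=k} a_i x_(n-i).  Hence u solves a perturbed
   recurrence of order k-1 with coefficients -p_i, q_i, to which criterion (a) applies,
   so u_n -> 0; finally |x_(n+1)| <= |rho| |x_n| + |u_(n+1)| with |rho| < 1 gives x_n -> 0.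
   The file proves the scalar decay lemmas, the norm estimate, the general criterion (a),
   the telescoping identities, criterion (b), and then the theorem.  Completeness of the
   algebra, invertibility of rho and the nondegeneracy a_k, b_k not both 0 are not used. *)

lemma linear_inequality_decay:
  fixes v c :: "nat \<Rightarrow> real" and m :: nat
  assumes v0: "\<And>n. v n \<ge> 0" and c0: "\<And>i. c i \<ge> 0" and cs: "(\<Sum>i=0..m. c i) < 1"
    and step: "\<And>n. n \<ge> m \<Longrightarrow> v (Suc n) \<le> (\<Sum>i=0..m. c i * v (n - i))"
  shows "v \<longlonglongrightarrow> 0"
proof -
  define C where "C = (\<Sum>i=0..m. c i)"
  define B where "B = (\<Sum>j=0..m. v j)"
  have C0: "0 \<le> C" unfolding C_def by (simp add: c0 sum_nonneg)
  have C1: "C < 1" using cs C_def by simp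
  have B0: "0 \<le> B" unfolding B_def by (simp add: v0 sum_nonneg)
  \<comment> \<open>Each block of \<open>m+1\<close> consecutive terms gains a factor \<open>C\<close>.\<close>
  have bound: "v n \<le> B * C ^ (n div Suc m)" for n
  proof (induction n rule: less_induct)
    case (less n)
    show ?case
    proof (cases "n \<le> m")
      case True
      then have "v n \<le> B" unfolding B_def
        by (intro member_le_sum) (use v0 in auto)
      with True show ?thesis by simp
    next
      case False
      then obtain n' where n': "n = Suc n'" "n' \<ge> m" by (cases n) auto
      define d where "d = (n' - m) div Suc m"
      have dn: "Suc d = n div Suc m"
      proof -
        have "n = (n' - m) + Suc m" using n' by simp
        then show ?thesis by (metis d_def div_add_self2 nat.simps(3) Suc_eq_plus1)
      qed
      have earlier: "v (n' - i) \<le> B * C ^ d" if "i \<in> {0..m}" for i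
      proof -
        have "v (n' - i) \<le> B * C ^ ((n' - i) div Suc m)"
          using less.IH[of "n' - i"] n' by simp
        also have "\<dots> \<le> B * C ^ d"
          using that C0 C1 B0
          by (intro mult_left_mono power_decreasing) (auto simp: d_def intro: div_le_mono)
        finally show ?thesis .
      qed
      have "v n \<le> (\<Sum>i=0..m. c i * v (n' - i))" using step n' by simp
      also have "\<dots> \<le> (\<Sum>i=0..m. c i * (B * C ^ d))"
        by (intro sum_mono mult_left_mono) (use earlier c0 in auto)
      also have "\<dots> = C * (B * C ^ d)" by (simp add: C_def sum_distrib_right)
      also have "\<dots> = B * C ^ (n div Suc m)" by (simp flip: dn)
      finally show ?thesis .
    qed
  qed
  have "(\<lambda>n. C ^ (n div Suc m)) \<longlonglongrightarrow> 0"
    using filterlim_compose[OF LIMSEQ_power_zero[of C] filterlim_at_top_div_const_nat[of "Suc m"]]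
      C0 C1 by simp
  then have "(\<lambda>n. B * C ^ (n div Suc m)) \<longlonglongrightarrow> 0" by (simp add: tendsto_mult_right_zero)
  then show ?thesis
    by (rule Lim_null_comparison[rotated]) (use bound v0 in auto)
qed

lemma linear_inequality_decay_int:
  fixes w :: "int \<Rightarrow> real" and c :: "nat \<Rightarrow> real" and m :: nat
  assumes w0: "\<And>N. w N \<ge> 0" and c0: "\<And>i. c i \<ge> 0" and cs: "(\<Sum>i=0..m. c i) < 1"
    and step: "\<And>N. N \<ge> 0 \<Longrightarrow> w (N + 1) \<le> (\<Sum>i=0..m. c i * w (N - int i))"
  shows "(\<lambda>n. w (int n)) \<longlonglongrightarrow> 0"
proof -
  define v where "v n = w (int n - int m)" for n
  have "v \<longlonglongrightarrow> 0"
  proof (rule linear_inequality_decay[OF _ c0 cs])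
    show "0 \<le> v n" for n by (simp add: v_def w0)
    fix n assume n: "m \<le> n"
    have "v (Suc n) = w ((int n - int m) + 1)" by (simp add: v_def algebra_simps)
    also have "\<dots> \<le> (\<Sum>i=0..m. c i * w ((int n - int m) - int i))"
      using step[of "int n - int m"] n by simp
    also have "\<dots> = (\<Sum>i=0..m. c i * v (n - i))"
      by (rule sum.cong) (use n in \<open>auto simp: v_def of_nat_diff algebra_simps\<close>)
    finally show "v (Suc n) \<le> (\<Sum>i=0..m. c i * v (n - i))" .
  qed
  then have "(\<lambda>n. v (n + m)) \<longlonglongrightarrow> 0" by (rule LIMSEQ_ignore_initial_segment)
  then show ?thesis by (simp add: v_def)
qed

lemma contraction_with_vanishing_input:
  fixes w e :: "nat \<Rightarrow> real"
  assumes w0: "\<And>n. w n \<ge> 0" and r0: "0 \<le> r" and r1: "r < 1" and e: "e \<longlonglongrightarrow> 0"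
    and step: "\<And>n. w (Suc n) \<le> r * w n + e (Suc n)"
  shows "w \<longlonglongrightarrow> 0"
proof (rule LIMSEQ_I)
  fix \<epsilon> :: real assume \<epsilon>: "\<epsilon> > 0"
  then have "\<epsilon> * (1 - r) / 2 > 0" using r1 by simp
  from LIMSEQ_D[OF e this] obtain N where N: "\<And>n. n \<ge> N \<Longrightarrow> norm (e n) < \<epsilon> * (1 - r) / 2"
    by auto
  \<comment> \<open>After time \<open>N\<close> the input contributes at most \<open>\<epsilon>/2\<close> in total.\<close>
  have after_N: "w (N + j) \<le> r ^ j * w N + \<epsilon> / 2" for j
  proof (induction j)
    case 0
    then show ?case using \<epsilon> by simp
  next
    case (Suc j)
    have "w (N + Suc j) \<le> r * w (N + j) + e (Suc (N + j))" using step[of "N + j"] by simp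
    also have "\<dots> \<le> r * (r ^ j * w N + \<epsilon> / 2) + \<epsilon> * (1 - r) / 2"
      using N[of "Suc (N + j)"] Suc.IH r0 by (intro add_mono mult_left_mono) auto
    also have "\<dots> = r ^ Suc j * w N + \<epsilon> / 2" by (simp add: field_simps)
    finally show ?case .
  qed
  have "(\<lambda>j. r ^ j * w N) \<longlonglongrightarrow> 0"
    using LIMSEQ_power_zero[of r] r0 r1 by (simp add: tendsto_mult_left_zero)
  from LIMSEQ_D[OF this, of "\<epsilon> / 2"] \<epsilon> obtain J
    where "\<forall>j\<ge>J. norm (r ^ j * w N - 0) < \<epsilon> / 2" by auto
  then have J: "\<And>j. j \<ge> J \<Longrightarrow> r ^ j * w N < \<epsilon> / 2" by auto
  show "\<exists>n0. \<forall>n\<ge>n0. norm (w n - 0) < \<epsilon>"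
  proof (intro exI allI impI)
    fix n assume "N + J \<le> n"
    then have "n = N + (n - N)" "n - N \<ge> J" by auto
    then show "norm (w n - 0) < \<epsilon>"
      using after_N[of "n - N"] J[of "n - N"] w0[of n] by simp
  qed
qed

lemma norm_perturbed_sum_le:
  fixes \<alpha> \<beta> z :: "nat \<Rightarrow> 'a::real_normed_algebra" and h :: "'a \<Rightarrow> 'a"
  assumes \<sigma>: "\<sigma> \<ge> 0" and h: "\<And>\<xi>. norm (h \<xi>) \<le> \<sigma> * norm \<xi>"
  shows "norm ((\<Sum>i\<in>I. \<alpha> i * z i) + h (\<Sum>i\<in>I. \<beta> i * z i))
    \<le> (\<Sum>i\<in>I. (norm (\<alpha> i) + \<sigma> * norm (\<beta> i)) * norm (z i))"
proof -
  have linear: "norm (\<Sum>i\<in>I. \<gamma> i * z i) \<le> (\<Sum>i\<in>I. norm (\<gamma> i) * norm (z i))" for \<gamma>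
    by (rule order_trans[OF norm_sum sum_mono]) (rule norm_mult_ineq)
  have "norm ((\<Sum>i\<in>I. \<alpha> i * z i) + h (\<Sum>i\<in>I. \<beta> i * z i))
      \<le> norm (\<Sum>i\<in>I. \<alpha> i * z i) + \<sigma> * norm (\<Sum>i\<in>I. \<beta> i * z i)"
    using h by (rule order_trans[OF norm_triangle_ineq add_left_mono])
  also have "\<dots> \<le> (\<Sum>i\<in>I. norm (\<alpha> i) * norm (z i)) + \<sigma> * (\<Sum>i\<in>I. norm (\<beta> i) * norm (z i))"
    using \<sigma> by (intro add_mono mult_left_mono linear)
  also have "\<dots> = (\<Sum>i\<in>I. (norm (\<alpha> i) + \<sigma> * norm (\<beta> i)) * norm (z i))"
    by (simp add: sum.distrib sum_distrib_left algebra_simps)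
  finally show ?thesis .
qed

lemma perturbed_recurrence_tendsto_zero:
  fixes \<alpha> \<beta> :: "nat \<Rightarrow> 'a::real_normed_algebra" and h :: "nat \<Rightarrow> 'a \<Rightarrow> 'a"
    and z :: "int \<Rightarrow> 'a" and m :: nat
  assumes \<sigma>: "\<sigma> \<ge> 0" and h: "\<And>n \<xi>. norm (h n \<xi>) \<le> \<sigma> * norm \<xi>"
    and rec: "\<And>N::int. N \<ge> 0 \<Longrightarrow>
       z (N + 1) = (\<Sum>i=0..m. \<alpha> i * z (N - int i)) + h (nat N) (\<Sum>i=0..m. \<beta> i * z (N - int i))"
    and small: "(\<Sum>i=0..m. norm (\<alpha> i) + \<sigma> * norm (\<beta> i)) < 1"
  shows "(\<lambda>n. z (int n)) \<longlonglongrightarrow> 0"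
proof -
  have "(\<lambda>n. norm (z (int n))) \<longlonglongrightarrow> 0"
  proof (rule linear_inequality_decay_int[of _ "\<lambda>i. norm (\<alpha> i) + \<sigma> * norm (\<beta> i)"])
    show "0 \<le> norm (\<alpha> i) + \<sigma> * norm (\<beta> i)" for i using \<sigma> by simp
    show "\<And>N. 0 \<le> N \<Longrightarrow> norm (z (N + 1))
        \<le> (\<Sum>i=0..m. (norm (\<alpha> i) + \<sigma> * norm (\<beta> i)) * norm (z (N - int i)))"
      using rec norm_perturbed_sum_le[OF \<sigma> h] by simp
  qed (use small in auto)
  then show ?thesis by (simp add: tendsto_norm_zero_iff)
qed

lemma horner_telescope:
  fixes r c y :: "nat \<Rightarrow> 'a::ring_1"
  assumes r0: "r 0 = c 0" and rSuc: "\<And>i. r (Suc i) = r i * \<rho> + c (Suc i)"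
  shows "(\<Sum>i=0..K. r i * (y i - \<rho> * y (Suc i)))
    = (\<Sum>i=0..Suc K. c i * y i) - r (Suc K) * y (Suc K)"
  by (induction K) (simp_all add: r0 rSuc algebra_simps)

lemma qcoef_Suc: "qcoef b \<rho> (Suc i) = qcoef b \<rho> i * \<rho> + b (Suc i)"
proof -
  have "(\<Sum>j=0..i. b j * \<rho> ^ (Suc i - j)) = (\<Sum>j=0..i. b j * \<rho> ^ (i - j)) * \<rho>"
    by (simp add: sum_distrib_right mult.assoc Suc_diff_le power_commutes)
  then show ?thesis unfolding qcoef_def by simp
qed

lemma pcoef_Suc: "pcoef a \<rho> (Suc i) = pcoef a \<rho> i * \<rho> - a (Suc i)"
proof -
  have "(\<Sum>j=0..i. a j * \<rho> ^ (Suc i - j)) = (\<Sum>j=0..i. a j * \<rho> ^ (i - j)) * \<rho>"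
    by (simp add: sum_distrib_right mult.assoc Suc_diff_le power_commutes)
  then show ?thesis unfolding pcoef_def by (simp add: algebra_simps power_commutes)
qed

lemma qcoef_telescope:
  assumes "polyQ (Suc K) b \<rho> = 0"
  shows "(\<Sum>i=0..K. qcoef b \<rho> i * (y i - \<rho> * y (Suc i))) = (\<Sum>i=0..Suc K. b i * y i)"
proof -
  have "qcoef b \<rho> (Suc K) = 0"
    using assms by (simp add: qcoef_def polyQ_def)
  moreover have "(\<Sum>i=0..K. qcoef b \<rho> i * (y i - \<rho> * y (Suc i)))
      = (\<Sum>i=0..Suc K. b i * y i) - qcoef b \<rho> (Suc K) * y (Suc K)"
  proof (rule horner_telescope)
    show "qcoef b \<rho> 0 = b 0" by (simp add: qcoef_def)
  qed (rule qcoef_Suc)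
  ultimately show ?thesis by simp
qed

lemma pcoef_telescope:
  assumes "polyP (Suc K) a \<rho> = 0"
  shows "(\<Sum>i=0..K. pcoef a \<rho> i * (y i - \<rho> * y (Suc i)))
    = \<rho> * y 0 - (\<Sum>i=0..Suc K. a i * y i)"
proof -
  define c where "c i = (if i = 0 then \<rho> - a 0 else - a i)" for i
  have "pcoef a \<rho> (Suc K) = 0"
    using assms by (simp add: pcoef_def polyP_def)
  moreover have "(\<Sum>i=0..Suc K. c i * y i) = \<rho> * y 0 - (\<Sum>i=0..Suc K. a i * y i)"
    by (simp add: c_def sum.atLeast_Suc_atMost algebra_simps sum_negf)
  moreover have "(\<Sum>i=0..K. pcoef a \<rho> i * (y i - \<rho> * y (Suc i)))
      = (\<Sum>i=0..Suc K. c i * y i) - pcoef a \<rho> (Suc K) * y (Suc K)"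
  proof (rule horner_telescope)
    show "pcoef a \<rho> 0 = c 0" by (simp add: pcoef_def c_def)
    show "pcoef a \<rho> (Suc i) = pcoef a \<rho> i * \<rho> + c (Suc i)" for i
      by (simp add: pcoef_Suc c_def)
  qed
  ultimately show ?thesis by simp
qed

lemma common_root_criterion:
  fixes a b :: "nat \<Rightarrow> 'a::real_normed_algebra_1" and g :: "nat \<Rightarrow> 'a \<Rightarrow> 'a"
    and x :: "int \<Rightarrow> 'a" and K :: nat
  assumes \<sigma>: "\<sigma> \<ge> 0" and g: "\<And>n \<xi>. norm (g n \<xi>) \<le> \<sigma> * norm \<xi>"
    and rec: "\<And>N::int. N \<ge> 0 \<Longrightarrow>
       x (N + 1) = (\<Sum>i=0..Suc K. a i * x (N - int i)) + g (nat N) (\<Sum>i=0..Suc K. b i * x (N - int i))"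
    and \<rho>: "norm \<rho> < 1" and P: "polyP (Suc K) a \<rho> = 0" and Q: "polyQ (Suc K) b \<rho> = 0"
    and small: "(\<Sum>i=0..K. norm (pcoef a \<rho> i) + \<sigma> * norm (qcoef b \<rho> i)) < 1"
  shows "(\<lambda>n. x (int n)) \<longlonglongrightarrow> 0"
proof -
  define u where "u N = x N - \<rho> * x (N - 1)" for N
  have u_rec: "u (N + 1) = (\<Sum>i=0..K. - pcoef a \<rho> i * u (N - int i))
      + g (nat N) (\<Sum>i=0..K. qcoef b \<rho> i * u (N - int i))" if "N \<ge> 0" for N
  proof -
    have u_shift: "u (N - int i) = x (N - int i) - \<rho> * x (N - int (Suc i))" for i
      by (simp add: u_def algebra_simps)
    have Q_sum: "(\<Sum>i=0..K. qcoef b \<rho> i * u (N - int i)) = (\<Sum>i=0..Suc K. b i * x (N - int i))"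
      using qcoef_telescope[OF Q, where y = "\<lambda>i. x (N - int i)"] by (simp only: u_shift)
    have P_sum: "(\<Sum>i=0..K. - pcoef a \<rho> i * u (N - int i))
        = (\<Sum>i=0..Suc K. a i * x (N - int i)) - \<rho> * x N"
      using pcoef_telescope[OF P, where y = "\<lambda>i. x (N - int i)"]
      by (simp only: u_shift sum_negf mult_minus_left) simp
    show ?thesis
      unfolding Q_sum P_sum using rec[OF that] by (simp add: u_def)
  qed
  have u_lim: "(\<lambda>n. norm (u (int n))) \<longlonglongrightarrow> 0"
    using perturbed_recurrence_tendsto_zero[OF \<sigma> g u_rec] small
    by (simp add: tendsto_norm_zero_iff)
  have "(\<lambda>n. norm (x (int n))) \<longlonglongrightarrow> 0"
  proof (rule contraction_with_vanishing_input[OF _ _ \<rho> u_lim])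
    fix n
    have "x (int (Suc n)) = \<rho> * x (int n) + u (int (Suc n))" by (simp add: u_def)
    then show "norm (x (int (Suc n))) \<le> norm \<rho> * norm (x (int n)) + norm (u (int (Suc n)))"
      by (metis add_right_mono norm_mult_ineq norm_triangle_ineq order_trans)
  qed simp_all
  then show ?thesis by (simp add: tendsto_norm_zero_iff)
qed

theorem theorem1:
  fixes a b :: "nat \<Rightarrow> 'a::{real_normed_algebra_1, banach}"
    and g :: "nat \<Rightarrow> 'a \<Rightarrow> 'a"
    and x :: "int \<Rightarrow> 'a"
    and k :: nat and \<sigma> :: real
  assumes k: "k \<ge> 1"
    and nz: "a k \<noteq> 0 \<or> b k \<noteq> 0"
    and sigma: "\<sigma> > 0"
    and gbound: "\<And>n \<xi>. norm (g n \<xi>) \<le> \<sigma> * norm \<xi>"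
    and rec: "\<And>n::int. n \<ge> 0 \<Longrightarrow>
       x (n + 1) = (\<Sum>i=0..k. a i * x (n - int i)) + g (nat n) (\<Sum>i=0..k. b i * x (n - int i))"
    and cond: "(\<Sum>i=0..k. norm (a i) + \<sigma> * norm (b i)) < 1
       \<or> (\<exists>\<rho>. is_unit_elem \<rho> \<and> norm \<rho> < 1 \<and> polyP k a \<rho> = 0 \<and> polyQ k b \<rho> = 0
            \<and> (\<Sum>i=0..k-1. norm (pcoef a \<rho> i) + \<sigma> * norm (qcoef b \<rho> i)) < 1)"
  shows "(\<lambda>n::nat. x (int n)) \<longlonglongrightarrow> 0"
proof -
  have \<sigma>: "\<sigma> \<ge> 0" using sigma by simp
  obtain K where kK: "k = Suc K" using k by (cases k) auto
  from cond show ?thesis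
  proof
    assume "(\<Sum>i=0..k. norm (a i) + \<sigma> * norm (b i)) < 1"
    then show ?thesis using perturbed_recurrence_tendsto_zero[OF \<sigma> gbound rec] by blast
  next
    assume "\<exists>\<rho>. is_unit_elem \<rho> \<and> norm \<rho> < 1 \<and> polyP k a \<rho> = 0 \<and> polyQ k b \<rho> = 0
            \<and> (\<Sum>i=0..k-1. norm (pcoef a \<rho> i) + \<sigma> * norm (qcoef b \<rho> i)) < 1"
    then obtain \<rho> where "norm \<rho> < 1" "polyP (Suc K) a \<rho> = 0" "polyQ (Suc K) b \<rho> = 0"
        "(\<Sum>i=0..K. norm (pcoef a \<rho> i) + \<sigma> * norm (qcoef b \<rho> i)) < 1"
      using kK by auto
    then show ?thesis
      using common_root_criterion[OF \<sigma> gbound rec[unfolded kK]] by blast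
  qed
qed

end
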